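(* Let $\theta\in\mathbb{R}\setminus\pi\mathbb{Q}$, $\mu\in\mathbb{C}\setminus\{0,1\}$ and $a,b\in\mathbb{C}^n$ with $a\neq b$. If $G$ is the group generated by $f=(a,e^{i\theta})$ and $g=(b,\mu)$, then $\overline{G(a)}=\mathbb{C}(b-a)+a=\{a+t(b-a):t\in\mathbb{C}\}$.
   Context: For $c\in\mathbb{C}^n$ and $\nu\in\mathbb{C}\setminus\{0,1\}$, $(c,\nu)$ denotes the map $z\mapsto\nu(z-c)+c$ of $\mathbb{C}^n$. $G(z)=\{h(z):h\in G\}$. *)

theory Defs
  imports "HOL-Analysis.Analysis"
begin

text \<open>The map (c,nu) of C^n: z maps to nu(z - c) + c.\<close>
definition homothety :: "complex^'n \<Rightarrow> complex \<Rightarrow> (complex^'n \<Rightarrow> complex^'n)" where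
  "homothety c \<nu> = (\<lambda>z. \<nu> *s (z - c) + c)"

inductive_set gen_group :: "('a \<Rightarrow> 'a) set \<Rightarrow> ('a \<Rightarrow> 'a) set" for S where
  gen_id: "id \<in> gen_group S"
| gen_comp: "s \<in> S \<Longrightarrow> h \<in> gen_group S \<Longrightarrow> s \<circ> h \<in> gen_group S"
| gen_comp_inv: "s \<in> S \<Longrightarrow> h \<in> gen_group S \<Longrightarrow> inv s \<circ> h \<in> gen_group S"

definition orbit :: "('a \<Rightarrow> 'a) set \<Rightarrow> 'a \<Rightarrow> 'a set" where
  "orbit G z = {h z | h. h \<in> G}"

end

theory Submission
  imports Defs
begin

(* Let omega = exp(i theta) = cis theta and line t = a + t(b - a).  Both generators
   f = (a, omega) and g = (b, mu) are homotheties centred on the complex line through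
   a and b, so they act on the line parameter t by the affine maps
   t |-> omega t  and  t |-> mu (t - 1) + 1.  Hence the orbit of a stays on the
   (closed) line, giving one inclusion.  For the other, let S be the set of parameters
   of orbit points.  S contains 0 and is invariant under both affine maps and their
   inverses; the commutator of these maps is the translation by d = (omega-1)(1-mu) /= 0,
   so d is a period of S, and the periods are closed under addition and under
   multiplication by omega.  Since the powers of omega are dense in the unit circle
   (theta/pi is irrational) and every w with |w| <= 2 is a sum of two unit numbers,
   the sums n (omega^j d + omega^k d) are dense in C; so S is dense and its image is
   dense in the line. *)

lemma norm_cis_minus_1_le: "cmod (cis s - 1) \<le> \<bar>s\<bar>"
  using dist_exp_i_1[of s] abs_sin_x_le_abs_x[of "s/2"] by (simp add: cis_conv_exp)

lemma cis_powers_dense: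
  fixes \<theta> \<phi> \<delta> :: real
  assumes irrational: "\<forall>q\<in>\<rat>. \<theta> \<noteq> pi * q" and "\<delta> > 0"
  shows "\<exists>k::nat. cmod (cis \<theta> ^ k - cis \<phi>) < \<delta>"
proof -
  have "\<theta> / (2*pi) \<notin> \<rat>"
  proof
    assume "\<theta> / (2*pi) \<in> \<rat>"
    then have "2 * (\<theta> / (2*pi)) \<in> \<rat>" by (intro Rats_mult) auto
    moreover have "\<theta> = pi * (2 * (\<theta> / (2*pi)))" by simp
    ultimately show False using irrational by blast
  qed
  then obtain h k :: int where "k > 0"
    and close: "\<bar>of_int k * (\<theta> / (2*pi)) - of_int h - \<phi> / (2*pi)\<bar> < \<delta> / (2*pi)"
    using sequence_of_fractional_parts_is_dense \<open>\<delta> > 0\<close>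
    by (metis divide_pos_pos pi_gt_zero zero_less_numeral mult_pos_pos)
  define s where "s = of_int k * \<theta> - 2 * pi * of_int h - \<phi>"
  have "s = 2*pi * (of_int k * (\<theta> / (2*pi)) - of_int h - \<phi> / (2*pi))"
    by (simp add: s_def field_simps)
  then have "\<bar>s\<bar> = 2*pi * \<bar>of_int k * (\<theta> / (2*pi)) - of_int h - \<phi> / (2*pi)\<bar>"
    by (simp add: abs_mult)
  also have "\<dots> < \<delta>"
    using close by (simp add: field_simps)
  finally have "\<bar>s\<bar> < \<delta>" .
  have "cis \<theta> ^ nat k = cis (of_int k * \<theta>)"
    using \<open>k > 0\<close> by (simp add: Complex.DeMoivre)
  also have "of_int k * \<theta> = \<phi> + s + 2 * pi * of_int h"
    by (simp add: s_def)
  also have "cis \<dots> = cis \<phi> * cis s"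
    by (simp flip: cis_mult)
  finally have "cis \<theta> ^ nat k - cis \<phi> = cis \<phi> * (cis s - 1)"
    by (simp add: algebra_simps)
  then have "cmod (cis \<theta> ^ nat k - cis \<phi>) = cmod (cis s - 1)"
    by (simp add: norm_mult)
  with norm_cis_minus_1_le[of s] \<open>\<bar>s\<bar> < \<delta>\<close> show ?thesis by (metis le_less_trans)
qed

(* Every complex number of modulus at most 2 is the sum of two unit complex numbers:
   cis (Arg w + beta) + cis (Arg w - beta) = 2 cos beta * cis (Arg w). *)
lemma sum_of_two_cis:
  fixes w :: complex
  assumes "cmod w \<le> 2"
  shows "\<exists>\<alpha> \<beta>. w = cis \<alpha> + cis \<beta>"
proof -
  define \<beta> where "\<beta> = arccos (cmod w / 2)"
  have "cos \<beta> = cmod w / 2"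
    unfolding \<beta>_def using assms norm_ge_zero[of w] by (intro cos_arccos) linarith+
  then have "cis (Arg w + \<beta>) + cis (Arg w - \<beta>) = rcis (cmod w) (Arg w)"
    by (simp add: rcis_def cis.ctr cos_add cos_diff sin_add sin_diff complex_eq_iff algebra_simps)
  then show ?thesis by (metis rcis_cmod_Arg)
qed

definition periods :: "'a::monoid_add set \<Rightarrow> 'a set" where
  "periods S = {v. \<forall>t\<in>S. t + v \<in> S}"

lemma zero_in_periods: "0 \<in> periods S"
  by (simp add: periods_def)

lemma periods_add: "u \<in> periods S \<Longrightarrow> v \<in> periods S \<Longrightarrow> u + v \<in> periods S"
  by (simp add: periods_def add.assoc[symmetric])

lemma periods_subset: "0 \<in> S \<Longrightarrow> periods S \<subseteq> S"
  by (force simp: periods_def)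

lemma nat_multiples_in_additive_monoid:
  fixes P :: "'a::semiring_1 set"
  assumes "0 \<in> P" and "\<And>u v. u \<in> P \<Longrightarrow> v \<in> P \<Longrightarrow> u + v \<in> P" and "v \<in> P"
  shows "of_nat n * v \<in> P"
  by (induction n) (simp_all add: assms distrib_right)

(* An additive submonoid of C containing every omega^k * d, d /= 0, is dense as soon as
   the powers of omega are dense in the unit circle: z is approximated by
   n (omega^k1 d + omega^k2 d) where z/(n d) = cis alpha + cis beta. *)
lemma dense_additive_monoid:
  fixes P :: "complex set" and \<omega> d :: complex
  assumes zero: "0 \<in> P" and add: "\<And>u v. u \<in> P \<Longrightarrow> v \<in> P \<Longrightarrow> u + v \<in> P"
    and dense_powers: "\<And>\<phi> \<delta>. \<delta> > 0 \<Longrightarrow> \<exists>k::nat. cmod (\<omega> ^ k - cis \<phi>) < \<delta>"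
    and "d \<noteq> 0" and rotations: "\<And>k. \<omega> ^ k * d \<in> P"
  shows "closure P = UNIV"
proof -
  have "\<exists>t\<in>P. cmod (t - z) < e" if "e > 0" for z e
  proof -
    define r where "r = cmod d"
    have "r > 0" using \<open>d \<noteq> 0\<close> by (simp add: r_def)
    obtain n :: nat where n: "cmod z / (2 * r) < of_nat n"
      using reals_Archimedean2 by blast
    have "n > 0" using n \<open>r > 0\<close> by (cases n) (auto simp: divide_less_0_iff)
    have "cmod (z / (of_nat n * d)) \<le> 2"
      using n \<open>r > 0\<close> \<open>n > 0\<close> by (simp add: r_def norm_divide norm_mult field_simps)
    then obtain \<alpha> \<beta> where w: "z / (of_nat n * d) = cis \<alpha> + cis \<beta>"
      using sum_of_two_cis by blast
    define \<delta> where "\<delta> = e / (2 * of_nat n * r)"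
    have "\<delta> > 0" using \<open>e > 0\<close> \<open>r > 0\<close> \<open>n > 0\<close> by (simp add: \<delta>_def)
    then obtain k1 k2 :: nat where k1: "cmod (\<omega> ^ k1 - cis \<alpha>) < \<delta>"
      and k2: "cmod (\<omega> ^ k2 - cis \<beta>) < \<delta>"
      using dense_powers by meson
    define t where "t = of_nat n * (\<omega> ^ k1 * d + \<omega> ^ k2 * d)"
    have "t \<in> P"
      unfolding t_def by (intro nat_multiples_in_additive_monoid zero add rotations)
    have "t - z = (of_nat n * d) * ((\<omega> ^ k1 - cis \<alpha>) + (\<omega> ^ k2 - cis \<beta>))"
      using w \<open>n > 0\<close> \<open>d \<noteq> 0\<close> by (simp add: t_def field_simps)
    then have "cmod (t - z) \<le> of_nat n * r * (cmod (\<omega> ^ k1 - cis \<alpha>) + cmod (\<omega> ^ k2 - cis \<beta>))"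
      using \<open>r > 0\<close> by (simp add: norm_mult r_def mult_left_mono norm_triangle_ineq)
    also have "\<dots> < of_nat n * r * (\<delta> + \<delta>)"
      using \<open>r > 0\<close> \<open>n > 0\<close> k1 k2 by (intro mult_strict_left_mono) auto
    also have "\<dots> = e"
      using \<open>r > 0\<close> \<open>n > 0\<close> by (simp add: \<delta>_def field_simps)
    finally show ?thesis using \<open>t \<in> P\<close> by blast
  qed
  then show ?thesis
    by (auto simp: closure_approachable dist_norm)
qed

lemma periods_rotation_invariant:
  fixes S :: "complex set"
  assumes "\<omega> \<noteq> 0" and "\<And>t. t \<in> S \<Longrightarrow> \<omega> * t \<in> S" and "\<And>t. t \<in> S \<Longrightarrow> inverse \<omega> * t \<in> S"
    and "v \<in> periods S"
  shows "\<omega> * v \<in> periods S"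
proof -
  have "t + \<omega> * v \<in> S" if "t \<in> S" for t
  proof -
    have "\<omega> * (inverse \<omega> * t + v) \<in> S"
      using assms that by (simp add: periods_def)
    moreover have "\<omega> * (inverse \<omega> * t + v) = t + \<omega> * v"
      using \<open>\<omega> \<noteq> 0\<close> by (simp add: field_simps)
    ultimately show ?thesis by simp
  qed
  then show ?thesis by (simp add: periods_def)
qed

(* The commutator of t |-> omega t and t |-> mu (t - 1) + 1 is translation by
   (omega - 1)(1 - mu); hence this number is a period of any set invariant under both
   maps and their inverses. *)
lemma commutator_period:
  fixes S :: "complex set"
  assumes "\<omega> \<noteq> 0" and "\<mu> \<noteq> 0"
    and "\<And>t. t \<in> S \<Longrightarrow> \<omega> * t \<in> S" and "\<And>t. t \<in> S \<Longrightarrow> inverse \<omega> * t \<in> S"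
    and "\<And>t. t \<in> S \<Longrightarrow> \<mu> * (t - 1) + 1 \<in> S" and "\<And>t. t \<in> S \<Longrightarrow> inverse \<mu> * (t - 1) + 1 \<in> S"
  shows "(\<omega> - 1) * (1 - \<mu>) \<in> periods S"
proof -
  have "t + (\<omega> - 1) * (1 - \<mu>) \<in> S" if "t \<in> S" for t
  proof -
    define s where "s = inverse \<omega> * (inverse \<mu> * (t - 1) + 1)"
    have "\<omega> * (\<mu> * (s - 1) + 1) \<in> S"
      using assms that by (simp add: s_def)
    moreover have "\<omega> * (\<mu> * (s - 1) + 1) = t + (\<omega> - 1) * (1 - \<mu>)"
      using assms(1,2) by (simp add: s_def field_simps)
    ultimately show ?thesis by simp
  qed
  then show ?thesis by (simp add: periods_def)
qed

lemma cis_irrational_ne_1: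
  assumes "\<forall>q\<in>\<rat>. \<theta> \<noteq> pi * q"
  shows "cis \<theta> \<noteq> 1"
proof
  assume "cis \<theta> = 1"
  then have "sin \<theta> = 0" by (metis cis.sel(2) one_complex.sel(2))
  then obtain i :: int where "\<theta> = pi * of_int i"
    by (auto simp: sin_zero_iff_int2 mult.commute)
  with assms show False by (metis Rats_of_int)
qed

lemma invariant_set_dense:
  fixes S :: "complex set"
  assumes irrational: "\<forall>q\<in>\<rat>. \<theta> \<noteq> pi * q" and "\<mu> \<noteq> 0" and "\<mu> \<noteq> 1" and "0 \<in> S"
    and rot: "\<And>t. t \<in> S \<Longrightarrow> cis \<theta> * t \<in> S" "\<And>t. t \<in> S \<Longrightarrow> inverse (cis \<theta>) * t \<in> S"
    and scale: "\<And>t. t \<in> S \<Longrightarrow> \<mu> * (t - 1) + 1 \<in> S" "\<And>t. t \<in> S \<Longrightarrow> inverse \<mu> * (t - 1) + 1 \<in> S"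
  shows "closure S = UNIV"
proof -
  define d where "d = (cis \<theta> - 1) * (1 - \<mu>)"
  have "d \<noteq> 0"
    using cis_irrational_ne_1[OF irrational] \<open>\<mu> \<noteq> 1\<close> by (simp add: d_def)
  have "cis \<theta> ^ k * d \<in> periods S" for k
  proof (induction k)
    case 0
    show ?case using commutator_period[OF _ \<open>\<mu> \<noteq> 0\<close> rot scale] by (simp add: d_def)
  next
    case (Suc k)
    then show ?case using periods_rotation_invariant[OF _ rot] by (simp add: mult.assoc)
  qed
  then have "closure (periods S) = UNIV"
    using dense_additive_monoid[OF zero_in_periods periods_add cis_powers_dense[OF irrational] \<open>d \<noteq> 0\<close>]
    by blast
  then show ?thesis
    using closure_mono[OF periods_subset[OF \<open>0 \<in> S\<close>]] by blast
qed

lemma homothety_on_line: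
  "homothety (a + s *s v) \<nu> (a + t *s v) = a + (\<nu> * (t - s) + s) *s v"
  by (simp add: homothety_def vec_eq_iff algebra_simps)

lemma inv_homothety:
  assumes "\<nu> \<noteq> 0"
  shows "inv (homothety c \<nu>) = homothety c (inverse \<nu>)"
  by (rule inv_equality) (use assms in \<open>simp_all add: homothety_def vec_eq_iff field_simps\<close>)

lemma linear_complex_direction: "linear (\<lambda>t::complex. t *s (v :: complex^'n))"
  by (rule linearI) (simp_all add: vec_eq_iff algebra_simps)

lemma continuous_complex_line: "continuous_on UNIV (\<lambda>t. a + t *s (v :: complex^'n))"
  using linear_complex_direction[of v]
  by (intro continuous_intros linear_continuous_on) (simp add: linear_conv_bounded_linear)

lemma closed_complex_line:
  fixes a v :: "complex^'n"
  shows "closed (range (\<lambda>t. a + t *s v))"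
proof -
  have "closed (range (\<lambda>t::complex. t *s v))"
    using linear_complex_direction[of v]
    by (intro closed_subspace linear_subspace_image subspace_UNIV)
  then have "closed ((+) a ` range (\<lambda>t::complex. t *s v))"
    by (rule closed_translation)
  then show ?thesis by (simp add: image_image)
qed

lemma gen_group_preserves:
  assumes "\<And>s x. s \<in> S \<Longrightarrow> x \<in> M \<Longrightarrow> s x \<in> M \<and> inv s x \<in> M"
    and "h \<in> gen_group S" and "x \<in> M"
  shows "h x \<in> M"
  using assms(2,3) by (induction arbitrary: x rule: gen_group.induct) (auto dest: assms(1))

lemma orbit_gen_group_closed:
  assumes "s \<in> S" and "x \<in> orbit (gen_group S) z"
  shows "s x \<in> orbit (gen_group S) z" and "inv s x \<in> orbit (gen_group S) z"
  using assms gen_group.gen_comp[of s S] gen_group.gen_comp_inv[of s S]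
  by (auto simp: orbit_def) (metis comp_apply)+

lemma orbit_contains_point: "z \<in> orbit (gen_group S) z"
  unfolding orbit_def using gen_group.gen_id by (metis (mono_tags) id_apply mem_Collect_eq)

lemma range_subset_closure_dense_image:
  assumes "continuous_on UNIV f" and "closure S = UNIV"
  shows "range f \<subseteq> closure (f ` S)"
  using image_closure_subset[OF continuous_on_subset[OF assms(1) subset_UNIV] closed_closure closure_subset,
      of S] assms(2) by simp

lemma orbit_in_line:
  fixes a v :: "complex^'n"
  assumes "\<And>h. h \<in> Gens \<Longrightarrow> \<exists>s \<nu>. h = homothety (a + s *s v) \<nu> \<and> \<nu> \<noteq> 0"
  shows "orbit (gen_group Gens) (a + t *s v) \<subseteq> range (\<lambda>t. a + t *s v)"
proof -
  have "h x \<in> range (\<lambda>t. a + t *s v) \<and> inv h x \<in> range (\<lambda>t. a + t *s v)"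
    if "h \<in> Gens" and "x \<in> range (\<lambda>t. a + t *s v)" for h x
  proof -
    obtain s \<nu> where h: "h = homothety (a + s *s v) \<nu>" and "\<nu> \<noteq> 0"
      using assms \<open>h \<in> Gens\<close> by blast
    obtain t where x: "x = a + t *s v"
      using \<open>x \<in> range _\<close> by blast
    show ?thesis
      unfolding h x inv_homothety[OF \<open>\<nu> \<noteq> 0\<close>] homothety_on_line by blast
  qed
  then show ?thesis
    unfolding orbit_def using gen_group_preserves[of Gens] by blast
qed

lemma orbit_line_parameters:
  fixes a v :: "complex^'n"
  assumes "homothety (a + s *s v) \<nu> \<in> Gens" and "\<nu> \<noteq> 0"
    and "a + t *s v \<in> orbit (gen_group Gens) z"
  shows "a + (\<nu> * (t - s) + s) *s v \<in> orbit (gen_group Gens) z"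
    and "a + (inverse \<nu> * (t - s) + s) *s v \<in> orbit (gen_group Gens) z"
  using orbit_gen_group_closed[OF assms(1,3)] assms(2)
  by (simp_all only: homothety_on_line inv_homothety[OF assms(2)])

(* The closure of the orbit of a is the complex line through a and b. *)
theorem proposition3p2:
  fixes \<theta> :: real and \<mu> :: complex and a b :: "complex^'n"
  assumes "\<forall>q\<in>\<rat>. \<theta> \<noteq> pi * q"
    and "\<mu> \<noteq> 0" and "\<mu> \<noteq> 1"
    and "a \<noteq> b"
  shows "closure (orbit (gen_group {homothety a (exp (\<i> * complex_of_real \<theta>)), homothety b \<mu>}) a)
           = {a + t *s (b - a) | t. True}"
proof -
  define line where "line t = a + t *s (b - a)" for t
  define Gens where "Gens = {homothety (line 0) (cis \<theta>), homothety (line 1) \<mu>}"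
  define S where "S = {t. line t \<in> orbit (gen_group Gens) a}"
  have centers: "line 0 = a" "line 1 = b"
    by (simp_all add: line_def)
  have "orbit (gen_group Gens) (line 0) \<subseteq> range line"
    unfolding line_def by (rule orbit_in_line)
      (use assms(2) in \<open>unfold Gens_def line_def, metis cis_neq_zero insertE empty_iff\<close>)
  then have upper: "closure (orbit (gen_group Gens) a) \<subseteq> range line"
    using closed_complex_line[of a "b - a"] by (simp add: closure_minimal centers line_def[abs_def])
  have "closure S = UNIV"
  proof (rule invariant_set_dense[OF assms(1-3)])
    show "0 \<in> S"
      using orbit_contains_point by (simp add: S_def centers)
  qed (use orbit_line_parameters[of a 0 "b - a" "cis \<theta>" Gens]
         orbit_line_parameters[of a 1 "b - a" \<mu> Gens] assms(2) in \<open>simp_all add: S_def Gens_def line_def\<close>)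
  then have "range line \<subseteq> closure (line ` S)"
    unfolding line_def by (rule range_subset_closure_dense_image[OF continuous_complex_line])
  also have "\<dots> \<subseteq> closure (orbit (gen_group Gens) a)"
    by (rule closure_mono) (auto simp: S_def)
  finally have lower: "range line \<subseteq> closure (orbit (gen_group Gens) a)" .
  have "Gens = {homothety a (exp (\<i> * complex_of_real \<theta>)), homothety b \<mu>}"
    by (simp add: Gens_def centers cis_conv_exp)
  with upper lower show ?thesis
    by (auto simp: line_def)
qed

end
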